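(* Let $(X,\rho_X)$ be a symmetric rack, $\mathcal F=(A,\phi,\psi,\eta)$ a constant-coefficient $(X,\rho_X)$-module, $\alpha\in Z^2_{SR}((X,\rho_X);A)$, and $E(\mathcal F,\alpha)$ the abelian extension of $(X,\rho_X)$ by $\mathcal F$ through $\alpha$. Then there is an exact sequence of groups $$0\to Z^1_{SR}((X,\rho_X);A)\xrightarrow{\ \iota\ }\operatorname{Aut}_A\big(E(\mathcal F,\alpha),\rho_{E(\mathcal F,\alpha)}\big)\xrightarrow{\ \Gamma\ }\operatorname{Aut}(X,\rho_X)\times\operatorname{Aut}(A)\xrightarrow{\ \Lambda_{[\alpha]}\ }H^2_{SR}((X,\rho_X);A),$$ where $\iota(\lambda)$ is the map $(x,s)\mapsto(x,\lambda(x)+s)$. That is: $\iota$ is an injective group homomorphism with image $\operatorname{Ker}(\Gamma)$, $\Gamma$ is a group homomorphism, and (with $\Lambda_{[\alpha]}$ merely a set map) $\operatorname{Im}(\Gamma)=\Lambda_{[\alpha]}^{-1}(0)$, where $0$ is the identity of $H^2_{SR}((X,\rho_X);A)$.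
   Context: A rack is a set $X$ with binary operation $*$ such that each $x\mapsto x*y$ is bijective (inverse $x\mapsto x*^{-1}y$) and $(x*y)*z=(x*z)*(y*z)$. A symmetric rack $(X,\rho_X)$ is a rack with $\rho_X:X\to X$ such that $\rho_X^2=\mathrm{id}$, $\rho_X(x*y)=\rho_X(x)*y$, $x*\rho_X(y)=x*^{-1}y$. $\operatorname{Aut}(X,\rho_X)$: bijections preserving $*$ and commuting with $\rho_X$. A constant-coefficient $(X,\rho_X)$-module $\mathcal F=(A,\phi,\psi,\eta)$: an abelian group $A$ with group automorphism $\phi$ and endomorphisms $\psi,\eta$ satisfying $\phi\psi=\psi\phi$, $\eta^2=\mathrm{id}$, $\eta\phi=\phi\eta$, $\eta\psi=\psi$, $\phi^2=\mathrm{id}$, $\psi=\phi\psi+\psi^2$, $\phi\psi\eta=-\psi$ (the module axioms with $A_x=A$, $\phi_{x,y}=\phi$, $\psi_{x,y}=\psi$, $\eta_x=\eta$). $\operatorname{Aut}(A)$: group automorphisms of $A$ commuting with $\phi,\psi,\eta$. Cohomology (all groups under pointwise addition): $Z^1_{SR}((X,\rho_X);A)=\{\lambda:X\to A\mid \phi\lambda(x)-\lambda(x*y)+\psi\lambda(y)=0,\ \eta\lambda(z)=\lambda(\rho_X(z))\ \forall x,y,z\}$. $Z^2_{SR}((X,\rho_X);A)$: maps $\sigma:X\times X\to A$ with, for all $x,y,z$: $-\phi\sigma(x,z)+\phi\sigma(x,y)+\sigma(x*y,z)-\sigma(x*z,y*z)-\psi\sigma(y,z)=0$, $\eta\sigma(x,y)=\sigma(\rho_X(x),y)$,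 $\phi\sigma(x*y,\rho_X(y))+\sigma(x,y)=0$. $B^2_{SR}$: maps $(x,y)\mapsto\phi\lambda(x)-\lambda(x*y)+\psi\lambda(y)$ with $\lambda:X\to A$ satisfying $\eta\lambda(x)=\lambda(\rho_X(x))$. $H^2_{SR}=Z^2_{SR}/B^2_{SR}$. Action: for $(\zeta,\theta)\in\operatorname{Aut}(X,\rho_X)\times\operatorname{Aut}(A)$, ${}^{(\zeta,\theta)}\sigma(x,y)=\theta(\sigma(\zeta^{-1}(x),\zeta^{-1}(y)))$ and ${}^{(\zeta,\theta)}[\sigma]=[{}^{(\zeta,\theta)}\sigma]$. $\Lambda_{[\alpha]}(\zeta,\theta)=[\alpha]-{}^{(\zeta,\theta)}[\alpha]$. $E(\mathcal F,\alpha)$ is the symmetric rack on $X\times A$ with $(x,a)*(y,b)=(x*y,\phi(a)+\psi(b)+\alpha(x,y))$ and $\rho_{E(\mathcal F,\alpha)}(x,a)=(\rho_X(x),\eta(a))$. $\operatorname{Aut}_A(E(\mathcal F,\alpha),\rho_{E(\mathcal F,\alpha)})$ is the group of symmetric rack automorphisms $\xi$ of $E(\mathcal F,\alpha)$ of the form $\xi(x,s)=(\zeta(x),\lambda(x)+\theta(s))$ for some $(\zeta,\theta)\in\operatorname{Aut}(X,\rho_X)\times\operatorname{Aut}(A)$ and some map $\lambda:X\to A$; $\Gamma(\xi)=(\zeta,\theta)$. *)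

theory Defs
  imports Main "HOL-Algebra.Coset"
begin

definition rack :: "('x \<Rightarrow> 'x \<Rightarrow> 'x) \<Rightarrow> bool" where
  "rack op \<longleftrightarrow> (\<forall>y. bij (\<lambda>x. op x y)) \<and>
     (\<forall>x y z. op (op x y) z = op (op x z) (op y z))"

definition rack_inv_op :: "('x \<Rightarrow> 'x \<Rightarrow> 'x) \<Rightarrow> 'x \<Rightarrow> 'x \<Rightarrow> 'x" where
  "rack_inv_op op x y = inv_into UNIV (\<lambda>u. op u y) x"

definition symmetric_rack :: "('x \<Rightarrow> 'x \<Rightarrow> 'x) \<Rightarrow> ('x \<Rightarrow> 'x) \<Rightarrow> bool" where
  "symmetric_rack op rho \<longleftrightarrow> rack op \<and> (\<forall>x. rho (rho x) = x) \<and>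
     (\<forall>x y. rho (op x y) = op (rho x) y) \<and>
     (\<forall>x y. op x (rho y) = rack_inv_op op x y)"

definition Aut_SR :: "('x \<Rightarrow> 'x \<Rightarrow> 'x) \<Rightarrow> ('x \<Rightarrow> 'x) \<Rightarrow> ('x \<Rightarrow> 'x) set" where
  "Aut_SR op rho = {z. bij z \<and> (\<forall>x y. z (op x y) = op (z x) (z y)) \<and> (\<forall>x. z (rho x) = rho (z x))}"

definition grp_hom_endo :: "('a::ab_group_add \<Rightarrow> 'a) \<Rightarrow> bool" where
  "grp_hom_endo f \<longleftrightarrow> (\<forall>a b. f (a + b) = f a + f b)"

definition cc_module :: "('a::ab_group_add \<Rightarrow> 'a) \<Rightarrow> ('a \<Rightarrow> 'a) \<Rightarrow> ('a \<Rightarrow> 'a) \<Rightarrow> bool" where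
  "cc_module phi psi eta \<longleftrightarrow>
     bij phi \<and> grp_hom_endo phi \<and> grp_hom_endo psi \<and> grp_hom_endo eta \<and>
     (\<forall>a. phi (psi a) = psi (phi a)) \<and>
     (\<forall>a. eta (eta a) = a) \<and>
     (\<forall>a. eta (phi a) = phi (eta a)) \<and>
     (\<forall>a. eta (psi a) = psi a) \<and>
     (\<forall>a. phi (phi a) = a) \<and>
     (\<forall>a. psi a = phi (psi a) + psi (psi a)) \<and>
     (\<forall>a. phi (psi (eta a)) = - psi a)"

definition Aut_Mod :: "('a::ab_group_add \<Rightarrow> 'a) \<Rightarrow> ('a \<Rightarrow> 'a) \<Rightarrow> ('a \<Rightarrow> 'a) \<Rightarrow> ('a \<Rightarrow> 'a) set" where
  "Aut_Mod phi psi eta = {t. bij t \<and> grp_hom_endo t \<and>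
     (\<forall>a. t (phi a) = phi (t a)) \<and> (\<forall>a. t (psi a) = psi (t a)) \<and> (\<forall>a. t (eta a) = eta (t a))}"

definition Z1_SR :: "('x \<Rightarrow> 'x \<Rightarrow> 'x) \<Rightarrow> ('x \<Rightarrow> 'x) \<Rightarrow> ('a::ab_group_add \<Rightarrow> 'a) \<Rightarrow> ('a \<Rightarrow> 'a) \<Rightarrow> ('a \<Rightarrow> 'a)
    \<Rightarrow> ('x \<Rightarrow> 'a) set" where
  "Z1_SR op rho phi psi eta = {l. (\<forall>x y. phi (l x) - l (op x y) + psi (l y) = 0) \<and>
     (\<forall>z. eta (l z) = l (rho z))}"

definition Z2_SR :: "('x \<Rightarrow> 'x \<Rightarrow> 'x) \<Rightarrow> ('x \<Rightarrow> 'x) \<Rightarrow> ('a::ab_group_add \<Rightarrow> 'a) \<Rightarrow> ('a \<Rightarrow> 'a) \<Rightarrow> ('a \<Rightarrow> 'a)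
    \<Rightarrow> ('x \<Rightarrow> 'x \<Rightarrow> 'a) set" where
  "Z2_SR op rho phi psi eta = {s.
     (\<forall>x y z. - phi (s x z) + phi (s x y) + s (op x y) z - s (op x z) (op y z) - psi (s y z) = 0) \<and>
     (\<forall>x y. eta (s x y) = s (rho x) y) \<and>
     (\<forall>x y. phi (s (op x y) (rho y)) + s x y = 0)}"

definition B2_SR :: "('x \<Rightarrow> 'x \<Rightarrow> 'x) \<Rightarrow> ('x \<Rightarrow> 'x) \<Rightarrow> ('a::ab_group_add \<Rightarrow> 'a) \<Rightarrow> ('a \<Rightarrow> 'a) \<Rightarrow> ('a \<Rightarrow> 'a)
    \<Rightarrow> ('x \<Rightarrow> 'x \<Rightarrow> 'a) set" where
  "B2_SR op rho phi psi eta = {s. \<exists>l. (\<forall>x. eta (l x) = l (rho x)) \<and>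
     s = (\<lambda>x y. phi (l x) - l (op x y) + psi (l y))}"

text \<open>Cohomology class in H^2_SR = Z^2_SR / B^2_SR, represented as the coset sigma + B^2_SR.\<close>
definition H2_class :: "('x \<Rightarrow> 'x \<Rightarrow> 'x) \<Rightarrow> ('x \<Rightarrow> 'x) \<Rightarrow> ('a::ab_group_add \<Rightarrow> 'a) \<Rightarrow> ('a \<Rightarrow> 'a) \<Rightarrow> ('a \<Rightarrow> 'a)
    \<Rightarrow> ('x \<Rightarrow> 'x \<Rightarrow> 'a) \<Rightarrow> ('x \<Rightarrow> 'x \<Rightarrow> 'a) set" where
  "H2_class op rho phi psi eta s = {t. (\<lambda>x y. t x y - s x y) \<in> B2_SR op rho phi psi eta}"

definition act2 :: "('x \<Rightarrow> 'x) \<times> ('a \<Rightarrow> 'a) \<Rightarrow> ('x \<Rightarrow> 'x \<Rightarrow> 'a) \<Rightarrow> ('x \<Rightarrow> 'x \<Rightarrow> 'a)" where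
  "act2 p s = (\<lambda>x y. snd p (s (inv_into UNIV (fst p) x) (inv_into UNIV (fst p) y)))"

text \<open>Lambda_[alpha](zeta,theta) = [alpha] - (zeta,theta)[alpha] = [alpha - (zeta,theta)alpha].\<close>
definition Lambda_SR :: "('x \<Rightarrow> 'x \<Rightarrow> 'x) \<Rightarrow> ('x \<Rightarrow> 'x) \<Rightarrow> ('a::ab_group_add \<Rightarrow> 'a) \<Rightarrow> ('a \<Rightarrow> 'a) \<Rightarrow> ('a \<Rightarrow> 'a)
    \<Rightarrow> ('x \<Rightarrow> 'x \<Rightarrow> 'a) \<Rightarrow> ('x \<Rightarrow> 'x) \<times> ('a \<Rightarrow> 'a) \<Rightarrow> ('x \<Rightarrow> 'x \<Rightarrow> 'a) set" where
  "Lambda_SR op rho phi psi eta alpha p =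
     H2_class op rho phi psi eta (\<lambda>x y. alpha x y - act2 p alpha x y)"

definition H2_zero :: "('x \<Rightarrow> 'x \<Rightarrow> 'x) \<Rightarrow> ('x \<Rightarrow> 'x) \<Rightarrow> ('a::ab_group_add \<Rightarrow> 'a) \<Rightarrow> ('a \<Rightarrow> 'a) \<Rightarrow> ('a \<Rightarrow> 'a)
    \<Rightarrow> ('x \<Rightarrow> 'x \<Rightarrow> 'a) set" where
  "H2_zero op rho phi psi eta = H2_class op rho phi psi eta (\<lambda>x y. 0)"

definition ext_op :: "('x \<Rightarrow> 'x \<Rightarrow> 'x) \<Rightarrow> ('a::ab_group_add \<Rightarrow> 'a) \<Rightarrow> ('a \<Rightarrow> 'a) \<Rightarrow> ('x \<Rightarrow> 'x \<Rightarrow> 'a)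
    \<Rightarrow> 'x \<times> 'a \<Rightarrow> 'x \<times> 'a \<Rightarrow> 'x \<times> 'a" where
  "ext_op op phi psi alpha = (\<lambda>(x, a) (y, b). (op x y, phi a + psi b + alpha x y))"

definition ext_rho :: "('x \<Rightarrow> 'x) \<Rightarrow> ('a \<Rightarrow> 'a) \<Rightarrow> 'x \<times> 'a \<Rightarrow> 'x \<times> 'a" where
  "ext_rho rho eta = (\<lambda>(x, a). (rho x, eta a))"

definition Aut_A_ext :: "('x \<Rightarrow> 'x \<Rightarrow> 'x) \<Rightarrow> ('x \<Rightarrow> 'x) \<Rightarrow> ('a::ab_group_add \<Rightarrow> 'a) \<Rightarrow> ('a \<Rightarrow> 'a) \<Rightarrow> ('a \<Rightarrow> 'a)
    \<Rightarrow> ('x \<Rightarrow> 'x \<Rightarrow> 'a) \<Rightarrow> ('x \<times> 'a \<Rightarrow> 'x \<times> 'a) set" where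
  "Aut_A_ext op rho phi psi eta alpha =
     {xi \<in> Aut_SR (ext_op op phi psi alpha) (ext_rho rho eta).
        \<exists>z t l. z \<in> Aut_SR op rho \<and> t \<in> Aut_Mod phi psi eta \<and>
          (\<forall>x s. xi (x, s) = (z x, l x + t s))}"

text \<open>Gamma(xi) = (zeta, theta), read off from xi(x,s) = (zeta x, lambda x + theta s).\<close>
definition Gamma_SR :: "('x \<times> 'a::ab_group_add \<Rightarrow> 'x \<times> 'a) \<Rightarrow> ('x \<Rightarrow> 'x) \<times> ('a \<Rightarrow> 'a)" where
  "Gamma_SR xi = ((\<lambda>x. fst (xi (x, 0))),
                  (\<lambda>s. snd (xi (undefined, s)) - snd (xi (undefined, 0))))"

definition iota_SR :: "('x \<Rightarrow> 'a::ab_group_add) \<Rightarrow> ('x \<times> 'a \<Rightarrow> 'x \<times> 'a)" where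
  "iota_SR l = (\<lambda>(x, s). (x, l x + s))"

definition Z1_group :: "('x \<Rightarrow> 'x \<Rightarrow> 'x) \<Rightarrow> ('x \<Rightarrow> 'x) \<Rightarrow> ('a::ab_group_add \<Rightarrow> 'a) \<Rightarrow> ('a \<Rightarrow> 'a) \<Rightarrow> ('a \<Rightarrow> 'a)
    \<Rightarrow> ('x \<Rightarrow> 'a) monoid" where
  "Z1_group op rho phi psi eta =
     \<lparr>carrier = Z1_SR op rho phi psi eta, mult = (\<lambda>l1 l2 x. l1 x + l2 x), one = (\<lambda>x. 0)\<rparr>"

definition Aut_A_ext_group :: "('x \<Rightarrow> 'x \<Rightarrow> 'x) \<Rightarrow> ('x \<Rightarrow> 'x) \<Rightarrow> ('a::ab_group_add \<Rightarrow> 'a) \<Rightarrow> ('a \<Rightarrow> 'a) \<Rightarrow> ('a \<Rightarrow> 'a)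
    \<Rightarrow> ('x \<Rightarrow> 'x \<Rightarrow> 'a) \<Rightarrow> ('x \<times> 'a \<Rightarrow> 'x \<times> 'a) monoid" where
  "Aut_A_ext_group op rho phi psi eta alpha =
     \<lparr>carrier = Aut_A_ext op rho phi psi eta alpha, mult = (\<lambda>f g. f \<circ> g), one = id\<rparr>"

definition Aut_SR_group :: "('x \<Rightarrow> 'x \<Rightarrow> 'x) \<Rightarrow> ('x \<Rightarrow> 'x) \<Rightarrow> ('x \<Rightarrow> 'x) monoid" where
  "Aut_SR_group op rho = \<lparr>carrier = Aut_SR op rho, mult = (\<lambda>f g. f \<circ> g), one = id\<rparr>"

definition Aut_Mod_group :: "('a::ab_group_add \<Rightarrow> 'a) \<Rightarrow> ('a \<Rightarrow> 'a) \<Rightarrow> ('a \<Rightarrow> 'a) \<Rightarrow> ('a \<Rightarrow> 'a) monoid" where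
  "Aut_Mod_group phi psi eta = \<lparr>carrier = Aut_Mod phi psi eta, mult = (\<lambda>f g. f \<circ> g), one = id\<rparr>"

end

theory Submission
  imports Defs HOL.Modules
begin

(*
  An automorphism of E(F, alpha) over A is a triangular map (x, s) \<mapsto> (zeta x, lambda x + theta s),
  and composing triangular maps composes the pairs (zeta, theta), so Gamma is a homomorphism.
  A triangular map respects the operation and the involution of E(F, alpha) exactly when
  lambda (x * y) + theta (alpha x y) = phi (lambda x) + psi (lambda y) + alpha (zeta x) (zeta y)
  and lambda \<circ> rho = eta \<circ> lambda.  For (zeta, theta) = (id, id) this says that lambda is a
  1-cocycle, so Ker Gamma = iota (Z^1).  In general the substitution mu = - lambda \<circ> zeta^-1 turns
  the condition into alpha - (zeta, theta) alpha = \<delta> mu, so (zeta, theta) is in the image of Gamma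
  iff Lambda_[alpha] (zeta, theta) = 0.
*)

lemma additive_iff_grp_hom_endo: "additive f \<longleftrightarrow> grp_hom_endo f"
  by (simp add: additive_def grp_hom_endo_def)

lemma perm_groupI:
  assumes "id \<in> S" and "\<And>f. f \<in> S \<Longrightarrow> bij f"
    and "\<And>f g. f \<in> S \<Longrightarrow> g \<in> S \<Longrightarrow> f \<circ> g \<in> S"
    and "\<And>f. f \<in> S \<Longrightarrow> inv_into UNIV f \<in> S"
  shows "group \<lparr>carrier = S, mult = (\<lambda>f g. f \<circ> g), one = id\<rparr>"
proof (rule groupI, goal_cases)
  case (5 f)
  then show ?case
    using assms(2,4)[of f] by (intro bexI[of _ "inv_into UNIV f"]) (simp_all add: bij_is_inj inv_o_cancel)
qed (use assms in \<open>auto simp: o_assoc\<close>)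

lemma bij_inv_commute:
  assumes "bij f" and "\<And>x. f (g x) = g (f x)"
  shows "inv_into UNIV f (g x) = g (inv_into UNIV f x)"
  by (metis assms bij_inv_eq_iff)

lemma bij_inv_hom2:
  assumes "bij f" and "\<And>x y. f (h x y) = h (f x) (f y)"
  shows "inv_into UNIV f (h x y) = h (inv_into UNIV f x) (inv_into UNIV f y)"
  by (metis assms bij_inv_eq_iff)

lemma Aut_SR_id: "id \<in> Aut_SR op rho"
  by (simp add: Aut_SR_def)

lemma Aut_SR_comp: "f \<in> Aut_SR op rho \<Longrightarrow> g \<in> Aut_SR op rho \<Longrightarrow> f \<circ> g \<in> Aut_SR op rho"
  by (auto simp: Aut_SR_def intro: bij_comp)

lemma Aut_SR_inv: "f \<in> Aut_SR op rho \<Longrightarrow> inv_into UNIV f \<in> Aut_SR op rho"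
  by (auto simp: Aut_SR_def bij_imp_bij_inv intro: bij_inv_commute bij_inv_hom2)

lemma group_Aut_SR_group: "group (Aut_SR_group op rho)"
  unfolding Aut_SR_group_def
  by (rule perm_groupI[OF Aut_SR_id _ Aut_SR_comp Aut_SR_inv]) (simp add: Aut_SR_def)

lemma Aut_Mod_id: "id \<in> Aut_Mod phi psi eta"
  by (simp add: Aut_Mod_def grp_hom_endo_def)

lemma Aut_Mod_comp:
  "f \<in> Aut_Mod phi psi eta \<Longrightarrow> g \<in> Aut_Mod phi psi eta \<Longrightarrow> f \<circ> g \<in> Aut_Mod phi psi eta"
  by (auto simp: Aut_Mod_def grp_hom_endo_def intro: bij_comp)

lemma Aut_Mod_inv: "f \<in> Aut_Mod phi psi eta \<Longrightarrow> inv_into UNIV f \<in> Aut_Mod phi psi eta"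
  by (auto simp: Aut_Mod_def grp_hom_endo_def bij_imp_bij_inv intro: bij_inv_commute bij_inv_hom2)

lemma Aut_Mod_zero: "t \<in> Aut_Mod phi psi eta \<Longrightarrow> t 0 = 0"
  by (simp add: Aut_Mod_def additive.zero flip: additive_iff_grp_hom_endo)

lemma group_Aut_Mod_group: "group (Aut_Mod_group phi psi eta)"
  unfolding Aut_Mod_group_def
  by (rule perm_groupI[OF Aut_Mod_id _ Aut_Mod_comp Aut_Mod_inv]) (simp add: Aut_Mod_def)

definition triangular_map :: "('x \<Rightarrow> 'x) \<Rightarrow> ('x \<Rightarrow> 'a::plus) \<Rightarrow> ('a \<Rightarrow> 'a) \<Rightarrow> 'x \<times> 'a \<Rightarrow> 'x \<times> 'a"
  where "triangular_map z l t = (\<lambda>(x, s). (z x, l x + t s))"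

lemma triangular_map_apply [simp]: "triangular_map z l t (x, s) = (z x, l x + t s)"
  by (simp add: triangular_map_def)

lemma iota_SR_eq_triangular_map: "iota_SR l = triangular_map id l id"
  by (simp add: iota_SR_def triangular_map_def)

lemma inj_iota_SR: "inj (iota_SR :: ('x \<Rightarrow> 'a::ab_group_add) \<Rightarrow> _)"
proof (rule injI)
  fix l m :: "'x \<Rightarrow> 'a"
  assume "iota_SR l = iota_SR m"
  then have "iota_SR l (x, 0) = iota_SR m (x, 0)" for x by simp
  then show "l = m" by (simp add: iota_SR_def fun_eq_iff)
qed

lemma Gamma_SR_triangular_map: "t 0 = 0 \<Longrightarrow> Gamma_SR (triangular_map z l t) = (z, t)"
  by (simp add: Gamma_SR_def fun_eq_iff)

lemma triangular_map_comp:
  assumes "grp_hom_endo t1"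
  shows "triangular_map z1 l1 t1 \<circ> triangular_map z2 l2 t2 =
    triangular_map (z1 \<circ> z2) (\<lambda>x. l1 (z2 x) + t1 (l2 x)) (t1 \<circ> t2)"
  using assms by (auto simp: fun_eq_iff grp_hom_endo_def add.assoc)

lemma
  assumes "bij z" and "bij t" and t: "grp_hom_endo t"
  shows bij_triangular_map: "bij (triangular_map z l t)"
    and inv_triangular_map:
      "inv_into UNIV (triangular_map z l t) =
        triangular_map (inv_into UNIV z) (\<lambda>x. - inv_into UNIV t (l (inv_into UNIV z x))) (inv_into UNIV t)"
proof -
  interpret t: additive t using t by (simp add: additive_iff_grp_hom_endo)
  let ?g = "triangular_map (inv_into UNIV z) (\<lambda>x. - inv_into UNIV t (l (inv_into UNIV z x)))
    (inv_into UNIV t)"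
  have inj: "inj (triangular_map z l t)"
    using bij_is_inj[OF assms(1)] bij_is_inj[OF assms(2)] by (auto intro!: injI simp: inj_eq)
  have right_inv: "triangular_map z l t (?g p) = p" for p
    using assms(1,2) by (cases p) (simp add: t.diff bij_is_surj surj_f_inv_f)
  then show "inv_into UNIV (triangular_map z l t) = ?g"
    using inj by (simp add: inj_imp_inv_eq)
  show "bij (triangular_map z l t)"
    using inj right_inv by (metis bijI surjI)
qed

lemma Aut_A_ext_triangular:
  "Aut_A_ext op rho phi psi eta alpha =
    {xi \<in> Aut_SR (ext_op op phi psi alpha) (ext_rho rho eta).
      \<exists>z t l. z \<in> Aut_SR op rho \<and> t \<in> Aut_Mod phi psi eta \<and> xi = triangular_map z l t}"
  by (simp add: Aut_A_ext_def fun_eq_iff)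

lemma Aut_A_ext_id:
  fixes alpha :: "'x \<Rightarrow> 'x \<Rightarrow> 'a::ab_group_add"
  shows "id \<in> Aut_A_ext op rho phi psi eta alpha"
proof -
  have "(id :: 'x \<times> 'a \<Rightarrow> _) = triangular_map id (\<lambda>x. 0) id"
    by (simp add: fun_eq_iff)
  then show ?thesis
    unfolding Aut_A_ext_triangular
    using Aut_SR_id[of "ext_op op phi psi alpha"] Aut_SR_id[of op] Aut_Mod_id[of phi] by blast
qed

lemma Aut_A_ext_comp:
  assumes "f \<in> Aut_A_ext op rho phi psi eta alpha" and "g \<in> Aut_A_ext op rho phi psi eta alpha"
  shows "f \<circ> g \<in> Aut_A_ext op rho phi psi eta alpha"
proof -
  obtain z1 t1 l1 z2 t2 l2 where
    z: "z1 \<in> Aut_SR op rho" "z2 \<in> Aut_SR op rho" and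
    t: "t1 \<in> Aut_Mod phi psi eta" "t2 \<in> Aut_Mod phi psi eta" and
    fg: "f = triangular_map z1 l1 t1" "g = triangular_map z2 l2 t2"
    using assms unfolding Aut_A_ext_triangular by blast
  have "f \<circ> g = triangular_map (z1 \<circ> z2) (\<lambda>x. l1 (z2 x) + t1 (l2 x)) (t1 \<circ> t2)"
    using t(1) by (simp add: fg triangular_map_comp Aut_Mod_def)
  then show ?thesis
    using assms Aut_SR_comp[OF z] Aut_Mod_comp[OF t]
    unfolding Aut_A_ext_triangular by (blast intro: Aut_SR_comp)
qed

lemma Aut_A_ext_inv:
  assumes "f \<in> Aut_A_ext op rho phi psi eta alpha"
  shows "inv_into UNIV f \<in> Aut_A_ext op rho phi psi eta alpha"
proof -
  obtain z t l where z: "z \<in> Aut_SR op rho" and t: "t \<in> Aut_Mod phi psi eta"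
    and f: "f = triangular_map z l t"
    using assms unfolding Aut_A_ext_triangular by blast
  have "inv_into UNIV f =
      triangular_map (inv_into UNIV z) (\<lambda>x. - inv_into UNIV t (l (inv_into UNIV z x))) (inv_into UNIV t)"
    using z t unfolding f Aut_SR_def Aut_Mod_def by (blast intro: inv_triangular_map)
  then show ?thesis
    using assms Aut_SR_inv[OF z] Aut_Mod_inv[OF t]
    unfolding Aut_A_ext_triangular by (blast intro: Aut_SR_inv)
qed

lemma group_Aut_A_ext_group: "group (Aut_A_ext_group op rho phi psi eta alpha)"
  unfolding Aut_A_ext_group_def
  by (rule perm_groupI[OF Aut_A_ext_id _ Aut_A_ext_comp Aut_A_ext_inv])
    (simp add: Aut_A_ext_def Aut_SR_def)

lemma Gamma_SR_hom:
  "Gamma_SR \<in> hom (Aut_A_ext_group op rho phi psi eta alpha)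
    (Aut_SR_group op rho \<times>\<times> Aut_Mod_group phi psi eta)"
proof (rule homI)
  fix f assume "f \<in> carrier (Aut_A_ext_group op rho phi psi eta alpha)"
  then obtain z t l where "z \<in> Aut_SR op rho" "t \<in> Aut_Mod phi psi eta" "f = triangular_map z l t"
    unfolding Aut_A_ext_group_def Aut_A_ext_triangular by auto
  then show "Gamma_SR f \<in> carrier (Aut_SR_group op rho \<times>\<times> Aut_Mod_group phi psi eta)"
    by (simp add: Gamma_SR_triangular_map Aut_Mod_zero DirProd_def Aut_SR_group_def Aut_Mod_group_def)
next
  fix f g
  assume "f \<in> carrier (Aut_A_ext_group op rho phi psi eta alpha)"
    and "g \<in> carrier (Aut_A_ext_group op rho phi psi eta alpha)"
  then obtain z1 t1 l1 z2 t2 l2 where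
    t: "t1 \<in> Aut_Mod phi psi eta" "t2 \<in> Aut_Mod phi psi eta" and
    fg: "f = triangular_map z1 l1 t1" "g = triangular_map z2 l2 t2"
    unfolding Aut_A_ext_group_def Aut_A_ext_triangular by auto
  have "f \<circ> g = triangular_map (z1 \<circ> z2) (\<lambda>x. l1 (z2 x) + t1 (l2 x)) (t1 \<circ> t2)"
    using t(1) by (simp add: fg triangular_map_comp Aut_Mod_def)
  then show "Gamma_SR (f \<otimes>\<^bsub>Aut_A_ext_group op rho phi psi eta alpha\<^esub> g) =
    Gamma_SR f \<otimes>\<^bsub>Aut_SR_group op rho \<times>\<times> Aut_Mod_group phi psi eta\<^esub> Gamma_SR g"
    using t by (simp add: fg Gamma_SR_triangular_map Aut_Mod_zero
      Aut_A_ext_group_def DirProd_def Aut_SR_group_def Aut_Mod_group_def)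
qed

definition lifting_cochain ::
    "('x \<Rightarrow> 'x \<Rightarrow> 'x) \<Rightarrow> ('x \<Rightarrow> 'x) \<Rightarrow> ('a::ab_group_add \<Rightarrow> 'a) \<Rightarrow> ('a \<Rightarrow> 'a) \<Rightarrow> ('a \<Rightarrow> 'a)
      \<Rightarrow> ('x \<Rightarrow> 'x \<Rightarrow> 'a) \<Rightarrow> ('x \<Rightarrow> 'x) \<Rightarrow> ('a \<Rightarrow> 'a) \<Rightarrow> ('x \<Rightarrow> 'a) \<Rightarrow> bool" where
  "lifting_cochain op rho phi psi eta alpha z t l \<longleftrightarrow>
    (\<forall>x y. l (op x y) + t (alpha x y) = phi (l x) + psi (l y) + alpha (z x) (z y)) \<and>
    (\<forall>x. l (rho x) = eta (l x))"

lemma lifting_cochain_id_iff_Z1_SR: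
  "lifting_cochain op rho phi psi eta alpha id id l \<longleftrightarrow> l \<in> Z1_SR op rho phi psi eta"
  by (auto simp: lifting_cochain_def Z1_SR_def algebra_simps)

context
  fixes phi psi eta :: "'a::ab_group_add \<Rightarrow> 'a"
  assumes phi_hom: "grp_hom_endo phi" and psi_hom: "grp_hom_endo psi" and eta_hom: "grp_hom_endo eta"
begin

interpretation phi: additive phi using phi_hom by (simp add: additive_iff_grp_hom_endo)
interpretation psi: additive psi using psi_hom by (simp add: additive_iff_grp_hom_endo)
interpretation eta: additive eta using eta_hom by (simp add: additive_iff_grp_hom_endo)

lemma group_Z1_group: "group (Z1_group op rho phi psi eta)"
  unfolding Z1_group_def
proof (rule groupI, goal_cases)
  case (1 l m)
  have "phi (l x + m x) - (l (op x y) + m (op x y)) + psi (l y + m y) =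
      (phi (l x) - l (op x y) + psi (l y)) + (phi (m x) - m (op x y) + psi (m y))" for x y
    by (simp add: phi.add psi.add algebra_simps)
  with 1 show ?case by (simp add: Z1_SR_def eta.add)
next
  case (5 l)
  have "phi (- l x) - - l (op x y) + psi (- l y) = - (phi (l x) - l (op x y) + psi (l y))" for x y
    by (simp add: phi.minus psi.minus algebra_simps)
  with 5 have "(\<lambda>x. - l x) \<in> Z1_SR op rho phi psi eta"
    by (simp add: Z1_SR_def eta.minus)
  then show ?case by (intro bexI[of _ "\<lambda>x. - l x"]) simp_all
qed (simp_all add: Z1_SR_def phi.zero psi.zero eta.zero add.assoc)

lemma triangular_map_in_Aut_A_ext_iff:
  assumes z: "z \<in> Aut_SR op rho" and t: "t \<in> Aut_Mod phi psi eta"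
  shows "triangular_map z l t \<in> Aut_A_ext op rho phi psi eta alpha \<longleftrightarrow>
    lifting_cochain op rho phi psi eta alpha z t l"
proof -
  interpret t: additive t using t by (simp add: Aut_Mod_def additive_iff_grp_hom_endo)
  let ?xi = "triangular_map z l t"
  have op_iff: "?xi (ext_op op phi psi alpha (x, a) (y, b)) =
        ext_op op phi psi alpha (z x, l x + t a) (z y, l y + t b) \<longleftrightarrow>
       l (op x y) + t (alpha x y) = phi (l x) + psi (l y) + alpha (z x) (z y)" for x a y b
  proof -
    have "l (op x y) + t (phi a + psi b + alpha x y) =
        (l (op x y) + t (alpha x y)) + (phi (t a) + psi (t b))"
      using t by (simp add: t.add Aut_Mod_def algebra_simps)
    moreover have "phi (l x + t a) + psi (l y + t b) + alpha (z x) (z y) =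
        (phi (l x) + psi (l y) + alpha (z x) (z y)) + (phi (t a) + psi (t b))"
      by (simp add: phi.add psi.add algebra_simps)
    ultimately show ?thesis
      using z by (simp add: ext_op_def Aut_SR_def)
  qed
  have rho_iff: "?xi (ext_rho rho eta (x, a)) = ext_rho rho eta (z x, l x + t a) \<longleftrightarrow>
      l (rho x) = eta (l x)" for x a
    using z t by (simp add: ext_rho_def Aut_SR_def Aut_Mod_def eta.add)
  have "bij ?xi"
    using z t by (simp add: bij_triangular_map Aut_SR_def Aut_Mod_def)
  then have "?xi \<in> Aut_SR (ext_op op phi psi alpha) (ext_rho rho eta) \<longleftrightarrow>
      lifting_cochain op rho phi psi eta alpha z t l"
    unfolding Aut_SR_def lifting_cochain_def split_paired_all by (simp add: op_iff rho_iff)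
  then show ?thesis
    unfolding Aut_A_ext_triangular using z t by blast
qed

lemma Aut_A_extE:
  assumes "xi \<in> Aut_A_ext op rho phi psi eta alpha"
  obtains z t l where "z \<in> Aut_SR op rho" and "t \<in> Aut_Mod phi psi eta"
    and "xi = triangular_map z l t" and "lifting_cochain op rho phi psi eta alpha z t l"
  using assms triangular_map_in_Aut_A_ext_iff unfolding Aut_A_ext_triangular by blast

lemma iota_SR_in_Aut_A_ext_iff:
  "iota_SR l \<in> Aut_A_ext op rho phi psi eta alpha \<longleftrightarrow> l \<in> Z1_SR op rho phi psi eta"
  by (simp add: iota_SR_eq_triangular_map triangular_map_in_Aut_A_ext_iff[OF Aut_SR_id Aut_Mod_id]
      lifting_cochain_id_iff_Z1_SR)

lemma iota_SR_hom:
  "iota_SR \<in> hom (Z1_group op rho phi psi eta) (Aut_A_ext_group op rho phi psi eta alpha)"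
proof (rule homI)
  show "iota_SR l \<in> carrier (Aut_A_ext_group op rho phi psi eta alpha)"
    if "l \<in> carrier (Z1_group op rho phi psi eta)" for l
    using that by (simp add: Z1_group_def Aut_A_ext_group_def iota_SR_in_Aut_A_ext_iff)
  show "iota_SR (l \<otimes>\<^bsub>Z1_group op rho phi psi eta\<^esub> m) =
      iota_SR l \<otimes>\<^bsub>Aut_A_ext_group op rho phi psi eta alpha\<^esub> iota_SR m" for l m
    by (auto simp: Z1_group_def Aut_A_ext_group_def iota_SR_def add.assoc)
qed

lemma kernel_Gamma_SR:
  "kernel (Aut_A_ext_group op rho phi psi eta alpha)
      (Aut_SR_group op rho \<times>\<times> Aut_Mod_group phi psi eta) Gamma_SR =
    iota_SR ` Z1_SR op rho phi psi eta"
proof -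
  have "xi \<in> Aut_A_ext op rho phi psi eta alpha \<and> Gamma_SR xi = (id, id) \<longleftrightarrow>
      xi \<in> iota_SR ` Z1_SR op rho phi psi eta" for xi
  proof
    assume "xi \<in> Aut_A_ext op rho phi psi eta alpha \<and> Gamma_SR xi = (id, id)"
    then obtain z t l where "t \<in> Aut_Mod phi psi eta" and "xi = triangular_map z l t"
      and "lifting_cochain op rho phi psi eta alpha z t l" and "(z, t) = (id, id)"
      by (metis Aut_A_extE Gamma_SR_triangular_map Aut_Mod_zero)
    then show "xi \<in> iota_SR ` Z1_SR op rho phi psi eta"
      by (auto simp: iota_SR_eq_triangular_map lifting_cochain_id_iff_Z1_SR)
  next
    assume "xi \<in> iota_SR ` Z1_SR op rho phi psi eta"
    then obtain l where "l \<in> Z1_SR op rho phi psi eta" and xi: "xi = iota_SR l" by blast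
    then have "xi \<in> Aut_A_ext op rho phi psi eta alpha"
      by (simp add: iota_SR_in_Aut_A_ext_iff)
    then show "xi \<in> Aut_A_ext op rho phi psi eta alpha \<and> Gamma_SR xi = (id, id)"
      by (simp add: xi iota_SR_eq_triangular_map Gamma_SR_triangular_map)
  qed
  then show ?thesis
    by (auto simp: kernel_def DirProd_def Aut_A_ext_group_def Aut_SR_group_def Aut_Mod_group_def)
qed

lemma B2_SR_zero: "(\<lambda>x y. 0) \<in> B2_SR op rho phi psi eta"
  unfolding B2_SR_def by (auto intro!: exI[of _ "\<lambda>x. 0"] simp: phi.zero psi.zero eta.zero)

lemma B2_SR_diff:
  assumes "s1 \<in> B2_SR op rho phi psi eta" and "s2 \<in> B2_SR op rho phi psi eta"
  shows "(\<lambda>x y. s1 x y - s2 x y) \<in> B2_SR op rho phi psi eta"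
proof -
  obtain l1 l2 where
    "\<And>x. eta (l1 x) = l1 (rho x)" "s1 = (\<lambda>x y. phi (l1 x) - l1 (op x y) + psi (l1 y))"
    "\<And>x. eta (l2 x) = l2 (rho x)" "s2 = (\<lambda>x y. phi (l2 x) - l2 (op x y) + psi (l2 y))"
    using assms unfolding B2_SR_def by blast
  then show ?thesis
    unfolding B2_SR_def
    by (auto intro!: exI[of _ "\<lambda>x. l1 x - l2 x"] simp: phi.diff psi.diff eta.diff fun_eq_iff)
qed

lemma H2_class_eq_H2_zero_iff:
  "H2_class op rho phi psi eta c = H2_zero op rho phi psi eta \<longleftrightarrow> c \<in> B2_SR op rho phi psi eta"
proof
  assume eq: "H2_class op rho phi psi eta c = H2_zero op rho phi psi eta"
  have "(\<lambda>x y. 0) \<in> H2_zero op rho phi psi eta"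
    using B2_SR_zero by (simp add: H2_zero_def H2_class_def)
  then have "(\<lambda>x y. 0 - c x y) \<in> B2_SR op rho phi psi eta"
    by (simp add: eq [symmetric] H2_class_def)
  from B2_SR_diff[OF B2_SR_zero this] show "c \<in> B2_SR op rho phi psi eta"
    by simp
next
  assume c: "c \<in> B2_SR op rho phi psi eta"
  have "(\<lambda>x y. s x y - c x y) \<in> B2_SR op rho phi psi eta \<longleftrightarrow> s \<in> B2_SR op rho phi psi eta" for s
    using B2_SR_diff[OF _ c, of s] B2_SR_diff[OF _ B2_SR_diff[OF B2_SR_zero c], of "\<lambda>x y. s x y - c x y"]
    by auto
  then show "H2_class op rho phi psi eta c = H2_zero op rho phi psi eta"
    unfolding H2_zero_def H2_class_def by (intro Collect_cong) simp
qed

lemma lifting_cochain_iff_coboundary: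
  assumes z: "z \<in> Aut_SR op rho"
  shows "lifting_cochain op rho phi psi eta alpha z t (\<lambda>x. - m (z x)) \<longleftrightarrow>
    (\<forall>x. eta (m x) = m (rho x)) \<and>
    (\<lambda>x y. alpha x y - act2 (z, t) alpha x y) = (\<lambda>x y. phi (m x) - m (op x y) + psi (m y))"
proof -
  have bij: "bij z" and z_op: "\<And>x y. z (op x y) = op (z x) (z y)"
    and z_rho: "\<And>x. z (rho x) = rho (z x)"
    using z by (simp_all add: Aut_SR_def)
  have all_z: "(\<forall>x. P x) \<longleftrightarrow> (\<forall>u. P (z u))" for P
    using bij by (metis bij_is_surj surjD)
  have all_z2: "(\<forall>x y. P x y) \<longleftrightarrow> (\<forall>u v. P (z u) (z v))" for P
    using bij by (metis bij_is_surj surjD)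
  have op_iff: "- m (z (op u v)) + t (alpha u v) = phi (- m (z u)) + psi (- m (z v)) + alpha (z u) (z v)
      \<longleftrightarrow> alpha (z u) (z v) - act2 (z, t) alpha (z u) (z v) =
        phi (m (z u)) - m (op (z u) (z v)) + psi (m (z v))" for u v
  proof -
    have "(- m (z (op u v)) + t (alpha u v)) - (phi (- m (z u)) + psi (- m (z v)) + alpha (z u) (z v)) =
      - ((alpha (z u) (z v) - act2 (z, t) alpha (z u) (z v)) -
        (phi (m (z u)) - m (op (z u) (z v)) + psi (m (z v))))"
      using bij by (simp add: act2_def z_op bij_is_inj phi.minus psi.minus algebra_simps)
    then show ?thesis
      by (metis eq_iff_diff_eq_0 neg_equal_0_iff_equal)
  qed
  have rho_iff: "- m (z (rho u)) = eta (- m (z u)) \<longleftrightarrow> eta (m (z u)) = m (rho (z u))" for u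
    by (auto simp: z_rho eta.minus)
  show ?thesis
    unfolding lifting_cochain_def fun_eq_iff op_iff rho_iff
    using all_z2[of "\<lambda>x y. alpha x y - act2 (z, t) alpha x y = phi (m x) - m (op x y) + psi (m y)"]
      all_z[of "\<lambda>x. eta (m x) = m (rho x)"] by blast
qed

lemma ex_lifting_cochain_iff_Lambda_SR_zero:
  assumes z: "z \<in> Aut_SR op rho"
  shows "(\<exists>l. lifting_cochain op rho phi psi eta alpha z t l) \<longleftrightarrow>
    Lambda_SR op rho phi psi eta alpha (z, t) = H2_zero op rho phi psi eta"
proof -
  have "(\<exists>l. lifting_cochain op rho phi psi eta alpha z t l) \<longleftrightarrow>
      (\<exists>m. lifting_cochain op rho phi psi eta alpha z t (\<lambda>x. - m (z x)))"
  proof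
    assume "\<exists>l. lifting_cochain op rho phi psi eta alpha z t l"
    then obtain l where "lifting_cochain op rho phi psi eta alpha z t l" ..
    moreover have "(\<lambda>x. - (- l (inv_into UNIV z (z x)))) = l"
      using z by (simp add: Aut_SR_def bij_is_inj fun_eq_iff)
    ultimately show "\<exists>m. lifting_cochain op rho phi psi eta alpha z t (\<lambda>x. - m (z x))"
      by (intro exI[of _ "\<lambda>x. - l (inv_into UNIV z x)"]) simp
  qed blast
  also have "\<dots> \<longleftrightarrow> (\<lambda>x y. alpha x y - act2 (z, t) alpha x y) \<in> B2_SR op rho phi psi eta"
    by (simp add: lifting_cochain_iff_coboundary[OF z] B2_SR_def)
  also have "\<dots> \<longleftrightarrow> Lambda_SR op rho phi psi eta alpha (z, t) = H2_zero op rho phi psi eta"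
    by (simp add: Lambda_SR_def H2_class_eq_H2_zero_iff)
  finally show ?thesis .
qed

lemma Gamma_SR_image_Aut_A_ext:
  "Gamma_SR ` Aut_A_ext op rho phi psi eta alpha =
    {p \<in> Aut_SR op rho \<times> Aut_Mod phi psi eta.
      Lambda_SR op rho phi psi eta alpha p = H2_zero op rho phi psi eta}"
proof -
  have "Gamma_SR ` Aut_A_ext op rho phi psi eta alpha =
      {(z, t). z \<in> Aut_SR op rho \<and> t \<in> Aut_Mod phi psi eta \<and>
      (\<exists>l. lifting_cochain op rho phi psi eta alpha z t l)}"
  proof (intro equalityI subsetI)
    fix p assume "p \<in> Gamma_SR ` Aut_A_ext op rho phi psi eta alpha"
    then show "p \<in> {(z, t). z \<in> Aut_SR op rho \<and> t \<in> Aut_Mod phi psi eta \<and>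
        (\<exists>l. lifting_cochain op rho phi psi eta alpha z t l)}"
      by (auto elim!: Aut_A_extE simp: Gamma_SR_triangular_map Aut_Mod_zero)
  next
    fix p assume "p \<in> {(z, t). z \<in> Aut_SR op rho \<and> t \<in> Aut_Mod phi psi eta \<and>
        (\<exists>l. lifting_cochain op rho phi psi eta alpha z t l)}"
    then obtain z t l where z: "z \<in> Aut_SR op rho" and t: "t \<in> Aut_Mod phi psi eta"
      and "lifting_cochain op rho phi psi eta alpha z t l" and p: "p = (z, t)" by blast
    then have "triangular_map z l t \<in> Aut_A_ext op rho phi psi eta alpha"
      by (simp add: triangular_map_in_Aut_A_ext_iff)
    moreover have "p = Gamma_SR (triangular_map z l t)"
      using t by (simp add: p Gamma_SR_triangular_map Aut_Mod_zero)
    ultimately show "p \<in> Gamma_SR ` Aut_A_ext op rho phi psi eta alpha" by blast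
  qed
  also have "\<dots> = {p \<in> Aut_SR op rho \<times> Aut_Mod phi psi eta.
      Lambda_SR op rho phi psi eta alpha p = H2_zero op rho phi psi eta}"
  proof (rule Set.set_eqI)
    fix p
    show "p \<in> {(z, t). z \<in> Aut_SR op rho \<and> t \<in> Aut_Mod phi psi eta \<and>
        (\<exists>l. lifting_cochain op rho phi psi eta alpha z t l)} \<longleftrightarrow>
      p \<in> {p \<in> Aut_SR op rho \<times> Aut_Mod phi psi eta.
        Lambda_SR op rho phi psi eta alpha p = H2_zero op rho phi psi eta}"
      by (cases p) (simp add: ex_lifting_cochain_iff_Lambda_SR_zero cong: conj_cong)
  qed
  finally show ?thesis .
qed

end

theorem theorem6p7:
  fixes op :: "'x \<Rightarrow> 'x \<Rightarrow> 'x" and rho :: "'x \<Rightarrow> 'x"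
    and phi psi eta :: "'a::ab_group_add \<Rightarrow> 'a"
    and alpha :: "'x \<Rightarrow> 'x \<Rightarrow> 'a"
  assumes "symmetric_rack op rho"
    and "cc_module phi psi eta"
    and "alpha \<in> Z2_SR op rho phi psi eta"
  shows "group (Z1_group op rho phi psi eta) \<and>
    group (Aut_A_ext_group op rho phi psi eta alpha) \<and>
    group (Aut_SR_group op rho \<times>\<times> Aut_Mod_group phi psi eta) \<and>
    iota_SR \<in> hom (Z1_group op rho phi psi eta) (Aut_A_ext_group op rho phi psi eta alpha) \<and>
    inj_on iota_SR (Z1_SR op rho phi psi eta) \<and>
    iota_SR ` Z1_SR op rho phi psi eta =
           kernel (Aut_A_ext_group op rho phi psi eta alpha)
                  (Aut_SR_group op rho \<times>\<times> Aut_Mod_group phi psi eta) Gamma_SR \<and>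
    Gamma_SR \<in> hom (Aut_A_ext_group op rho phi psi eta alpha)
                        (Aut_SR_group op rho \<times>\<times> Aut_Mod_group phi psi eta) \<and>
    Gamma_SR ` Aut_A_ext op rho phi psi eta alpha =
           {p \<in> Aut_SR op rho \<times> Aut_Mod phi psi eta.
              Lambda_SR op rho phi psi eta alpha p = H2_zero op rho phi psi eta}"
proof -
  have homs: "grp_hom_endo phi" "grp_hom_endo psi" "grp_hom_endo eta"
    using assms(2) unfolding cc_module_def by blast+
  show ?thesis
    using group_Z1_group[OF homs] group_Aut_A_ext_group
      DirProd_group[OF group_Aut_SR_group group_Aut_Mod_group]
      iota_SR_hom[OF homs] inj_on_subset[OF inj_iota_SR subset_UNIV]
      kernel_Gamma_SR[OF homs, symmetric] Gamma_SR_hom Gamma_SR_image_Aut_A_ext[OF homs]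
    by (intro conjI)
qed

end
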